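(* Let $\bm A\colon\mathbb{R}^d\to\mathbb{R}^m$ and $\bm B\colon\mathbb{R}^d\to\mathbb{R}^n$ be linear maps. Let $\bm a_1,\bm a_2,\ldots\in\mathbb{R}^d$ be a sequence such that $\bm A\bm a_1,\bm A\bm a_2,\ldots$ converges to $\bm v\in\mathbb{R}^m$ and $\bm B$ is simultaneously unbounded on $\bm a_1,\bm a_2,\ldots$. Then there exist (1) $\bm a\in\mathbb{R}^d$ with $\bm A\bm a=\bm v$, and (2) $\bm d_\infty\in\mathbb{R}^d$ with $\bm A\bm d_\infty=\bm 0$ and $\bm B\bm d_\infty\gg\bm 0$.
   Context: $\bm B$ is simultaneously unbounded on a sequence $\bm a_1,\bm a_2,\dots$ if for every $K\in\mathbb{N}$, $\bm B\bm a_j\ge(K,\dots,K)$ componentwise for almost all $j$. For vectors, $\bm u\gg\bm w$ means $u_i>w_i$ for every component $i$. *)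

theory Defs
  imports "HOL-Analysis.Analysis"
begin

definition simult_unbounded :: "real^'d^'n \<Rightarrow> (nat \<Rightarrow> real^'d) \<Rightarrow> bool" where
  "simult_unbounded B a \<longleftrightarrow>
     (\<forall>K::nat. eventually (\<lambda>j. \<forall>i. (B *v a j) $ i \<ge> real K) sequentially)"

end

theory Submission
  imports Defs
begin

text \<open>Choose a linear right inverse g of A on its range and replace each a j by its
  component g (A a j), which converges because A a j does. The differences
  a j - g (A a j) lie in the kernel of A, and B differs on them from B a j by a bounded
  amount, so for large j they are mapped into the open positive orthant.\<close>

lemma linear_right_inverse_on_range:
  fixes f :: "'a::euclidean_space \<Rightarrow> 'b::euclidean_space"
  assumes "linear f"
  obtains g where "linear g" and "\<And>x. f (g (f x)) = f x"
  using real_vector.linear_exists_right_inverse_on[OF assms real_vector.subspace_UNIV]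
  by auto

lemma convergent_preimage_seq:
  fixes f :: "'a::euclidean_space \<Rightarrow> 'b::euclidean_space"
  assumes "linear f" and lim: "(\<lambda>j. f (a j)) \<longlonglongrightarrow> v"
  obtains x b where "f x = v" and "b \<longlonglongrightarrow> x" and "\<And>j. f (b j) = f (a j)"
proof -
  obtain g where g: "linear g" and fg: "\<And>x. f (g (f x)) = f x"
    using linear_right_inverse_on_range[OF \<open>linear f\<close>] by blast
  have lim_g: "(\<lambda>j. g (f (a j))) \<longlonglongrightarrow> g v"
    using g lim by (metis bounded_linear.tendsto linear_conv_bounded_linear)
  then have "(\<lambda>j. f (g (f (a j)))) \<longlonglongrightarrow> f (g v)"
    using \<open>linear f\<close> by (metis bounded_linear.tendsto linear_conv_bounded_linear)
  then have "f (g v) = v"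
    using lim LIMSEQ_unique by (simp add: fg)
  then show thesis
    using lim_g fg by (rule that)
qed

lemma simult_unbounded_diff_Bseq:
  assumes "simult_unbounded B a" and "Bseq (\<lambda>j. B *v b j)"
  obtains j where "\<And>i. (B *v (a j - b j)) $ i > 0"
proof -
  obtain M where M: "\<And>j. norm (B *v b j) \<le> M"
    using \<open>Bseq _\<close> by (auto simp: Bseq_def)
  have "eventually (\<lambda>j. \<forall>i. (B *v a j) $ i \<ge> real (nat \<lceil>M + 1\<rceil>)) sequentially"
    using assms(1) unfolding simult_unbounded_def by blast
  then obtain j where j: "\<And>i. (B *v a j) $ i \<ge> real (nat \<lceil>M + 1\<rceil>)"
    using eventually_happens'[OF sequentially_bot] by blast
  have "(B *v (a j - b j)) $ i > 0" for i
  proof -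
    have "(B *v b j) $ i \<le> M"
      using component_le_norm_cart[of "B *v b j" i] M[of j] by linarith
    moreover have "(B *v a j) $ i \<ge> M + 1"
      using j[of i] by linarith
    ultimately show ?thesis
      by (simp add: matrix_vector_mult_diff_distrib)
  qed
  then show thesis by (rule that)
qed

theorem mainTheorem12:
  fixes A :: "real^'d^'m" and B :: "real^'d^'n"
    and a :: "nat \<Rightarrow> real^'d" and v :: "real^'m"
  assumes "(\<lambda>j. A *v a j) \<longlonglongrightarrow> v"
    and "simult_unbounded B a"
  shows "(\<exists>x. A *v x = v) \<and> (\<exists>d. A *v d = 0 \<and> (\<forall>i. (B *v d) $ i > 0))"
proof -
  obtain x b where x: "A *v x = v" and "b \<longlonglongrightarrow> x" and b: "\<And>j. A *v b j = A *v a j"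
    using convergent_preimage_seq[OF matrix_vector_mul_linear assms(1)] by blast
  then have "(\<lambda>j. B *v b j) \<longlonglongrightarrow> B *v x"
    by (metis bounded_linear.tendsto linear_conv_bounded_linear matrix_vector_mul_linear)
  then obtain j where pos: "\<And>i. (B *v (a j - b j)) $ i > 0"
    using simult_unbounded_diff_Bseq[OF assms(2)] convergent_imp_Bseq convergentI by metis
  have "A *v (a j - b j) = 0"
    by (simp add: matrix_vector_mult_diff_distrib b)
  with x pos show ?thesis by blast
qed

end
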